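(* Let $0<\alpha<n$, $0<t\le s<\infty$ and $0<q_j\le p_j<\infty$ for $j=1,2$. Suppose that $\frac1s=\frac1{p_1}+\frac1{p_2}-\frac\alpha n$ and $\frac ts>\max\left(\frac{q_1}{p_1},\frac{q_2}{p_2}\right)$. Then there exists no constant $C>0$ such that $$\|B_\alpha(f,g)\|_{\mathcal{M}^s_t}\le C\,\|f\|_{\mathcal{M}^{p_1}_{q_1}}\|g\|_{\mathcal{M}^{p_2}_{q_2}}$$ holds for all (nonnegative measurable) $f,g$ with $\|f\|_{\mathcal{M}^{p_1}_{q_1}}\|g\|_{\mathcal{M}^{p_2}_{q_2}}<\infty$.
   Context: For $0<\alpha<n$ the bilinear fractional integral operator is $B_\alpha(f,g)(x)=\int_{\mathbb{R}^n}\frac{f(x-y)g(x+y)}{|y|^{n-\alpha}}\,dy$. $\mathscr{D}$ denotes the set of dyadic cubes $2^k(m+[0,1)^n)$, $k\in\mathbb{Z}$, $m\in\mathbb{Z}^n$, and $\fint_Q h=\frac1{|Q|}\int_Q h$. For $0<q\le p<\infty$ the Morrey (quasi-)norm is $\|f\|_{\mathcal{M}^p_q}=\sup_{Q\in\mathscr{D}}|Q|^{1/p}\left(\fint_Q|f(x)|^q\,dx\right)^{1/q}$. *)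

theory Defs
  imports "HOL-Analysis.Analysis"
begin

text \<open>Real powers of extended nonnegative reals (used only with positive exponents r):
  \<infinity> to a positive power is \<infinity>.\<close>
definition epow :: "ennreal \<Rightarrow> real \<Rightarrow> ennreal" where
  "epow x r = (if x = \<infinity> then \<infinity> else ennreal (enn2real x powr r))"

definition dyadic_cube :: "int \<Rightarrow> int ^ 'n \<Rightarrow> (real ^ 'n::finite) set" where
  "dyadic_cube k m = {x. \<forall>i. 2 powr real_of_int k * real_of_int (m $ i) \<le> x $ i
                            \<and> x $ i < 2 powr real_of_int k * (real_of_int (m $ i) + 1)}"

definition dyadic_cubes :: "(real ^ 'n::finite) set set" where
  "dyadic_cubes = {Q. \<exists>k m. Q = dyadic_cube k m}"

definition morrey_norm :: "real \<Rightarrow> real \<Rightarrow> (real ^ 'n::finite \<Rightarrow> ennreal) \<Rightarrow> ennreal" where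
  "morrey_norm p q h = (SUP Q\<in>dyadic_cubes.
      ennreal (measure lebesgue Q powr (1 / p)) *
      epow (ennreal (1 / measure lebesgue Q) * (\<integral>\<^sup>+ x\<in>Q. epow (h x) q \<partial>lebesgue)) (1 / q))"

definition bilinear_frac_int :: "real \<Rightarrow> (real ^ 'n::finite \<Rightarrow> real) \<Rightarrow> (real ^ 'n \<Rightarrow> real)
    \<Rightarrow> real ^ 'n \<Rightarrow> ennreal" where
  "bilinear_frac_int \<alpha> f g x = (\<integral>\<^sup>+ y. ennreal (f (x - y) * g (x + y) / norm y powr (real CARD('n) - \<alpha>)) \<partial>lebesgue)"

end

theory Submission
  imports Defs
begin

text \<open>Take f = g = 1_E with E = F^n, where F \<subseteq> [0,1) is a comb: one tooth of length 2^(-a) at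
  the left end of each of the 2^b dyadic intervals of length 2^(-b). A dyadic interval of length 2^k
  meets F in measure at most 2^((1-r)k - ra) whenever ra \<le> a - b, so with r = q/p the Morrey norm
  of 1_E in M^p_q is at most 2^(-na/p). On the other hand B_\<alpha>(1_E, 1_E) \<ge> c 2^(-a\<alpha>) on the product of the
  middle halves of the teeth, a subset of the unit cube of measure 2^(n(b-a-1)), so the M^s_t norm of
  B_\<alpha>(1_E, 1_E) is at least c 2^(n(b-a-1)/t - a\<alpha>). Choosing a - b \<approx> \<theta>a with
  \<theta> = max(q1/p1, q2/p2), the ratio of the two sides grows like 2^(na(1/s - \<theta>/t)), which is
  unbounded because t/s > \<theta>.\<close>

section \<open>Coordinate boxes and dyadic cubes\<close>

lemma sets_borel_vec_box:
  fixes A :: "'n::finite \<Rightarrow> real set"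
  assumes [measurable]: "\<And>i. A i \<in> sets borel"
  shows "{x::real^'n. \<forall>i. x$i \<in> A i} \<in> sets borel"
  by measurable

lemma prod_Basis_vec:
  "(\<Prod>b\<in>(Basis :: (real^'n::finite) set). h b) = (\<Prod>i\<in>UNIV. h (axis i 1))"
proof -
  have Basis_eq: "(Basis :: (real^'n) set) = range (\<lambda>i. axis i 1)"
    by (auto simp: Basis_vec_def)
  show ?thesis
    unfolding Basis_eq by (subst prod.reindex) (auto simp: inj_on_def axis_eq_axis)
qed

lemma emeasure_lborel_vec_box:
  fixes A :: "'n::finite \<Rightarrow> real set"
  assumes [measurable]: "\<And>i. A i \<in> sets borel"
  shows "emeasure lborel {x::real^'n. \<forall>i. x$i \<in> A i} = (\<Prod>i\<in>UNIV. emeasure lborel (A i))"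
proof -
  define coord where "coord b = (SOME i. b = axis i (1::real))" for b :: "real^'n"
  have coord_axis: "coord (axis i 1) = i" for i
    unfolding coord_def by (rule some_equality) (auto simp: axis_eq_axis)
  have "emeasure lborel {x::real^'n. \<forall>i. x$i \<in> A i}
      = (\<integral>\<^sup>+x. (\<Prod>b\<in>Basis. indicator (A (coord b)) (x \<bullet> b)) \<partial>lborel)"
    by (subst nn_integral_indicator[symmetric], measurable, intro nn_integral_cong)
      (auto simp: prod_Basis_vec coord_axis cart_eq_inner_axis[symmetric] indicator_def prod.neutral)
  also have "\<dots> = (\<Prod>b\<in>Basis. emeasure lborel (A (coord b)))"
    by (subst nn_integral_lborel_prod) auto
  finally show ?thesis
    by (simp add: prod_Basis_vec coord_axis)
qed

lemma norm_le_card_mult_cart: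
  fixes y :: "real^'n::finite"
  assumes "\<And>i. \<bar>y$i\<bar> \<le> e"
  shows "norm y \<le> real CARD('n) * e"
proof -
  have "norm y \<le> (\<Sum>i\<in>UNIV. \<bar>y$i\<bar>)"
    by (rule norm_le_l1_cart)
  also have "\<dots> \<le> real CARD('n) * e"
    using assms by (intro sum_bounded_above)
  finally show ?thesis .
qed

lemma emeasure_lebesgue_vec_box_Ioo:
  assumes "c \<le> d"
  shows "emeasure lebesgue {y::real^'n::finite. \<forall>i. y$i \<in> {c <..< d}} = (d - c) ^ CARD('n)"
proof -
  have "emeasure lebesgue {y::real^'n. \<forall>i. y$i \<in> {c <..< d}} = emeasure lborel {y::real^'n. \<forall>i. y$i \<in> {c <..< d}}"
    by (simp add: sets_borel_vec_box)
  also have "\<dots> = (\<Prod>i\<in>(UNIV::'n set). ennreal (d - c))"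
    using assms by (subst emeasure_lborel_vec_box) auto
  finally show ?thesis
    using assms by (simp add: ennreal_power)
qed

definition dyadic_interval :: "int \<Rightarrow> int \<Rightarrow> real set" where
  "dyadic_interval k m = {2 powr k * m ..< 2 powr k * (m + 1)}"

lemma dyadic_interval_borel [measurable]: "dyadic_interval k m \<in> sets borel"
  by (simp add: dyadic_interval_def)

lemma emeasure_dyadic_interval: "emeasure lborel (dyadic_interval k m) = 2 powr k"
  by (simp add: dyadic_interval_def algebra_simps)

lemma mem_dyadic_interval_iff: "x \<in> dyadic_interval k m \<longleftrightarrow> \<lfloor>x / 2 powr k\<rfloor> = m"
  by (simp add: dyadic_interval_def floor_eq_iff field_simps)

lemma floor_divide_two_powr_div:
  assumes "k \<le> l"
  shows "\<lfloor>x / 2 powr l\<rfloor> = \<lfloor>x / 2 powr k\<rfloor> div 2 ^ nat (l - k)"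
proof -
  have "(2::real) powr l = 2 powr k * real_of_int (2 ^ nat (l - k))"
    using assms by (simp add: powr_realpow[symmetric] powr_add[symmetric])
  then show ?thesis
    by (simp add: floor_divide_real_eq_div[symmetric] divide_divide_eq_left)
qed

lemma dyadic_interval_subset:
  "k \<le> l \<Longrightarrow> dyadic_interval k m \<subseteq> dyadic_interval l (m div 2 ^ nat (l - k))"
  by (auto simp: mem_dyadic_interval_iff floor_divide_two_powr_div)

lemma disjoint_dyadic_interval: "m \<noteq> m' \<Longrightarrow> dyadic_interval k m \<inter> dyadic_interval k m' = {}"
  by (auto simp: mem_dyadic_interval_iff)

lemma dyadic_cube_eq_vec_box: "dyadic_cube k m = {x. \<forall>i. x$i \<in> dyadic_interval k (m$i)}"
  by (auto simp: dyadic_cube_def dyadic_interval_def)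

lemma emeasure_dyadic_cube:
  "emeasure lebesgue (dyadic_cube k m :: (real^'n::finite) set) = 2 powr (real CARD('n) * real_of_int k)"
  unfolding dyadic_cube_eq_vec_box
  by (simp add: sets_borel_vec_box emeasure_lborel_vec_box emeasure_dyadic_interval
      ennreal_power powr_power)

lemma measure_dyadic_cube:
  "measure lebesgue (dyadic_cube k m :: (real^'n::finite) set) = 2 powr (real CARD('n) * real_of_int k)"
  by (simp add: measure_def emeasure_dyadic_cube)

lemma dyadic_cube_lebesgue [measurable]: "dyadic_cube k m \<in> sets lebesgue"
  unfolding dyadic_cube_eq_vec_box by (intro sets_completionI_sets sets_borel_vec_box) simp

section \<open>Morrey norms\<close>

lemma epow_ennreal: "0 \<le> z \<Longrightarrow> epow (ennreal z) r = ennreal (z powr r)"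
  by (simp add: epow_def)

lemma epow_mono:
  assumes "0 \<le> r" "x \<le> y"
  shows "epow x r \<le> epow y r"
proof (cases "y = \<infinity>")
  case True
  then show ?thesis by (simp add: epow_def)
next
  case False
  then have "x \<noteq> \<infinity>"
    using assms(2) by (metis infinity_ennreal_def top.extremum_uniqueI)
  with False assms show ?thesis
    by (auto simp: epow_def top.not_eq_extremum intro!: ennreal_leI powr_mono2 enn2real_mono)
qed

lemma morrey_norm_indicator_le:
  fixes E :: "(real^'n::finite) set"
  assumes E: "E \<in> sets lebesgue" and q: "0 < q"
    and bound: "\<And>Q. Q \<in> dyadic_cubes \<Longrightarrow>
      measure lebesgue Q powr (1 / p) * (measure lebesgue (Q \<inter> E) / measure lebesgue Q) powr (1 / q) \<le> M"
  shows "morrey_norm p q (\<lambda>x. ennreal (indicator E x)) \<le> ennreal M"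
  unfolding morrey_norm_def
proof (rule SUP_least)
  fix Q :: "(real^'n) set"
  assume Q: "Q \<in> dyadic_cubes"
  then obtain k m where Q_eq: "Q = dyadic_cube k m"
    by (auto simp: dyadic_cubes_def)
  have "emeasure lebesgue (Q \<inter> E) \<le> emeasure lebesgue Q"
    using E by (intro emeasure_mono) (auto simp: Q_eq)
  then have QE: "emeasure lebesgue (Q \<inter> E) = measure lebesgue (Q \<inter> E)"
    by (intro emeasure_eq_ennreal_measure) (auto simp: Q_eq emeasure_dyadic_cube top_unique)
  have "(\<integral>\<^sup>+ x\<in>Q. epow (ennreal (indicator E x)) q \<partial>lebesgue) = (\<integral>\<^sup>+ x. indicator (Q \<inter> E) x \<partial>lebesgue)"
    using q by (intro nn_integral_cong) (auto simp: epow_def split: split_indicator)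
  also have "\<dots> = emeasure lebesgue (Q \<inter> E)"
    using E by (simp add: Q_eq)
  finally have integral_eq:
    "(\<integral>\<^sup>+ x\<in>Q. epow (ennreal (indicator E x)) q \<partial>lebesgue) = emeasure lebesgue (Q \<inter> E)" .
  show "ennreal (measure lebesgue Q powr (1 / p)) *
      epow (ennreal (1 / measure lebesgue Q) * (\<integral>\<^sup>+ x\<in>Q. epow (ennreal (indicator E x)) q \<partial>lebesgue)) (1 / q)
      \<le> ennreal M"
    using bound[OF Q] unfolding integral_eq
    by (simp add: QE epow_ennreal ennreal_mult'[symmetric] ennreal_mult[symmetric] ennreal_leI)
qed

lemma morrey_norm_ge_on_subset:
  fixes h :: "real^'n::finite \<Rightarrow> ennreal"
  assumes Q: "Q \<in> dyadic_cubes" and A: "A \<in> sets lebesgue" "A \<subseteq> Q"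
    and w: "0 \<le> w" and q: "0 < q" and lower: "\<And>x. x \<in> A \<Longrightarrow> ennreal w \<le> h x"
  shows "ennreal (measure lebesgue Q powr (1 / p) * w * (measure lebesgue A / measure lebesgue Q) powr (1 / q))
    \<le> morrey_norm p q h"
proof -
  obtain k m where Q_eq: "Q = dyadic_cube k m"
    using Q by (auto simp: dyadic_cubes_def)
  have "emeasure lebesgue A \<le> emeasure lebesgue Q"
    using A by (intro emeasure_mono) (auto simp: Q_eq)
  then have A_fin: "emeasure lebesgue A = measure lebesgue A"
    by (intro emeasure_eq_ennreal_measure) (auto simp: Q_eq emeasure_dyadic_cube top_unique)
  have "ennreal (w powr q * measure lebesgue A) = (\<integral>\<^sup>+ x. ennreal (w powr q) * indicator A x \<partial>lebesgue)"
    by (subst nn_integral_cmult_indicator) (use A in \<open>auto simp: A_fin ennreal_mult\<close>)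
  also have "\<dots> \<le> (\<integral>\<^sup>+ x\<in>Q. epow (h x) q \<partial>lebesgue)"
    using A lower w q
    by (intro nn_integral_mono) (auto simp: indicator_def epow_ennreal[symmetric] intro!: epow_mono)
  finally have I: "ennreal (w powr q * measure lebesgue A) \<le> (\<integral>\<^sup>+ x\<in>Q. epow (h x) q \<partial>lebesgue)" .
  have "ennreal (w * (measure lebesgue A / measure lebesgue Q) powr (1 / q))
      = epow (ennreal (1 / measure lebesgue Q) * ennreal (w powr q * measure lebesgue A)) (1 / q)"
  proof -
    have "(w powr q * (measure lebesgue A / measure lebesgue Q)) powr (1 / q)
        = (w powr q) powr (1 / q) * (measure lebesgue A / measure lebesgue Q) powr (1 / q)"
      by (rule powr_mult)
    also have "(w powr q) powr (1 / q) = w"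
      using w q by (simp add: powr_powr)
    finally show ?thesis
      by (simp add: epow_ennreal ennreal_mult[symmetric])
  qed
  also have "\<dots> \<le> epow (ennreal (1 / measure lebesgue Q) * (\<integral>\<^sup>+ x\<in>Q. epow (h x) q \<partial>lebesgue)) (1 / q)"
    using I q by (intro epow_mono mult_left_mono) auto
  finally have J: "ennreal (w * (measure lebesgue A / measure lebesgue Q) powr (1 / q))
      \<le> epow (ennreal (1 / measure lebesgue Q) * (\<integral>\<^sup>+ x\<in>Q. epow (h x) q \<partial>lebesgue)) (1 / q)" .
  have "ennreal (measure lebesgue Q powr (1 / p) * w * (measure lebesgue A / measure lebesgue Q) powr (1 / q))
      = ennreal (measure lebesgue Q powr (1 / p)) * ennreal (w * (measure lebesgue A / measure lebesgue Q) powr (1 / q))"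
    using w by (simp add: ennreal_mult mult.assoc)
  also have "\<dots> \<le> ennreal (measure lebesgue Q powr (1 / p)) *
      epow (ennreal (1 / measure lebesgue Q) * (\<integral>\<^sup>+ x\<in>Q. epow (h x) q \<partial>lebesgue)) (1 / q)"
    using J by (rule mult_left_mono) simp
  also have "\<dots> \<le> morrey_norm p q h"
    unfolding morrey_norm_def by (rule SUP_upper[OF Q])
  finally show ?thesis .
qed

section \<open>Combs\<close>

definition tooth :: "nat \<Rightarrow> nat \<Rightarrow> int \<Rightarrow> real set" where
  "tooth a b j = {j * 2 powr - real b ..< j * 2 powr - real b + 2 powr - real a}"

definition comb :: "nat \<Rightarrow> nat \<Rightarrow> real set" where
  "comb a b = (\<Union>j\<in>{0..<2 ^ b}. tooth a b j)"

definition inner_tooth :: "nat \<Rightarrow> nat \<Rightarrow> int \<Rightarrow> real set" where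
  "inner_tooth a b j = {j * 2 powr - real b + 2 powr - real a / 4 ..< j * 2 powr - real b + 3 * 2 powr - real a / 4}"

definition inner_comb :: "nat \<Rightarrow> nat \<Rightarrow> real set" where
  "inner_comb a b = (\<Union>j\<in>{0..<2 ^ b}. inner_tooth a b j)"

lemma tooth_borel [measurable]: "tooth a b j \<in> sets borel"
  by (simp add: tooth_def)

lemma inner_tooth_borel [measurable]: "inner_tooth a b j \<in> sets borel"
  by (simp add: inner_tooth_def)

lemma comb_borel [measurable]: "comb a b \<in> sets borel"
  by (simp add: comb_def)

lemma inner_comb_borel [measurable]: "inner_comb a b \<in> sets borel"
  by (simp add: inner_comb_def)

lemma emeasure_tooth: "emeasure lborel (tooth a b j) = 2 powr - real a"
  by (simp add: tooth_def)

lemma emeasure_inner_tooth: "emeasure lborel (inner_tooth a b j) = 2 powr - real a / 2"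
  by (simp add: inner_tooth_def)

lemma tooth_subset_dyadic_interval:
  assumes "b \<le> a"
  shows "tooth a b j \<subseteq> dyadic_interval (- int b) j"
proof -
  have "(2::real) powr - real a \<le> 2 powr - real b"
    using assms by simp
  then show ?thesis
    by (auto simp: tooth_def dyadic_interval_def algebra_simps)
qed

lemma inner_tooth_subset_tooth: "inner_tooth a b j \<subseteq> tooth a b j"
  by (auto simp: inner_tooth_def tooth_def)

lemma comb_subset_unit_interval:
  assumes "b \<le> a"
  shows "comb a b \<subseteq> dyadic_interval 0 0"
proof
  fix x assume "x \<in> comb a b"
  then obtain j where j: "0 \<le> j" "j < 2 ^ b" and x: "x \<in> tooth a b j"
    by (auto simp: comb_def)
  have "x \<in> dyadic_interval 0 (j div 2 ^ nat (0 - - int b))"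
    using x tooth_subset_dyadic_interval[OF assms] dyadic_interval_subset[of "- int b" 0] by auto
  then show "x \<in> dyadic_interval 0 0"
    using j by (simp add: div_pos_pos_trivial)
qed

lemma dyadic_interval_Int_comb_subset_tooth:
  assumes "b \<le> a" and "k \<le> - int b"
  shows "dyadic_interval k m \<inter> comb a b \<subseteq> tooth a b (m div 2 ^ nat (- int b - k))"
proof
  fix x assume "x \<in> dyadic_interval k m \<inter> comb a b"
  then obtain j where xI: "x \<in> dyadic_interval k m" and x: "x \<in> tooth a b j"
    by (auto simp: comb_def)
  have "x \<in> dyadic_interval (- int b) j" "x \<in> dyadic_interval (- int b) (m div 2 ^ nat (- int b - k))"
    using x xI tooth_subset_dyadic_interval[OF assms(1)] dyadic_interval_subset[OF assms(2)] by auto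
  then have "j = m div 2 ^ nat (- int b - k)"
    using disjoint_dyadic_interval by blast
  with x show "x \<in> tooth a b (m div 2 ^ nat (- int b - k))"
    by simp
qed

lemma dyadic_interval_Int_comb_subset_teeth:
  assumes "b \<le> a" and "- int b \<le> k"
  defines "P \<equiv> 2 ^ nat (k + int b) :: int"
  shows "dyadic_interval k m \<inter> comb a b \<subseteq> (\<Union>j\<in>{m * P ..< (m + 1) * P}. tooth a b j)"
proof
  fix x assume "x \<in> dyadic_interval k m \<inter> comb a b"
  then obtain j where xI: "x \<in> dyadic_interval k m" and x: "x \<in> tooth a b j"
    by (auto simp: comb_def)
  have "x \<in> dyadic_interval k (j div P)"
    using x tooth_subset_dyadic_interval[OF assms(1)] dyadic_interval_subset[OF assms(2)]
    by (auto simp: P_def)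
  then have "j div P = m"
    using xI disjoint_dyadic_interval by blast
  then have "j = m * P + j mod P"
    by (metis div_mult_mod_eq)
  moreover have "0 \<le> j mod P" "j mod P < P"
    by (simp_all add: P_def)
  ultimately have "j \<in> {m * P ..< (m + 1) * P}"
    by (simp add: algebra_simps)
  with x show "x \<in> (\<Union>j\<in>{m * P ..< (m + 1) * P}. tooth a b j)"
    by blast
qed

lemma emeasure_teeth_le:
  assumes "finite J"
  shows "emeasure lborel (\<Union>j\<in>J. tooth a b j) \<le> card J * 2 powr - real a"
proof -
  have "emeasure lborel (\<Union>j\<in>J. tooth a b j) \<le> (\<Sum>j\<in>J. emeasure lborel (tooth a b j))"
    using assms by (intro emeasure_subadditive_finite) auto
  also have "\<dots> = card J * 2 powr - real a"
    by (simp add: emeasure_tooth ennreal_of_nat_eq_real_of_nat ennreal_mult)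
  finally show ?thesis .
qed

lemma emeasure_dyadic_interval_Int_comb_le_tooth:
  assumes "b \<le> a" and "k \<le> - int b"
  shows "emeasure lborel (dyadic_interval k m \<inter> comb a b) \<le> 2 powr - real a"
proof -
  have "emeasure lborel (dyadic_interval k m \<inter> comb a b) \<le> emeasure lborel (tooth a b (m div 2 ^ nat (- int b - k)))"
    using dyadic_interval_Int_comb_subset_tooth[OF assms] by (intro emeasure_mono) auto
  then show ?thesis
    by (simp add: emeasure_tooth)
qed

lemma emeasure_dyadic_interval_Int_comb_le_teeth:
  assumes "b \<le> a" and "- int b \<le> k"
  shows "emeasure lborel (dyadic_interval k m \<inter> comb a b) \<le> 2 powr (k + b - a)"
proof -
  define P :: int where "P = 2 ^ nat (k + int b)"
  have "emeasure lborel (dyadic_interval k m \<inter> comb a b)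
      \<le> emeasure lborel (\<Union>j\<in>{m * P ..< (m + 1) * P}. tooth a b j)"
    using dyadic_interval_Int_comb_subset_teeth[OF assms] by (intro emeasure_mono) (auto simp: P_def)
  also have "\<dots> \<le> card {m * P ..< (m + 1) * P} * 2 powr - real a"
    by (rule emeasure_teeth_le) simp
  also have "card {m * P ..< (m + 1) * P} = 2 powr (k + b)"
    using assms by (simp add: P_def algebra_simps powr_realpow[symmetric])
  finally show ?thesis
    by (simp add: powr_add[symmetric])
qed

lemma emeasure_comb_le: "emeasure lborel (comb a b) \<le> 2 powr (real b - real a)"
proof -
  have "emeasure lborel (comb a b) \<le> card {0..<(2::int) ^ b} * 2 powr - real a"
    unfolding comb_def by (rule emeasure_teeth_le) simp
  also have "card {0..<(2::int) ^ b} = 2 powr b"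
    by (simp add: powr_realpow)
  finally show ?thesis
    by (simp add: powr_add[symmetric])
qed

lemma emeasure_dyadic_interval_Int_comb_le:
  fixes r :: real
  assumes ba: "b \<le> a" and r: "0 < r" "r \<le> 1" and gap: "r * a \<le> real a - real b"
  shows "emeasure lborel (dyadic_interval k m \<inter> comb a b) \<le> 2 powr ((1 - r) * k - r * a)"
proof -
  let ?T = "(1 - r) * k - r * a"
  have bound: "emeasure lborel (dyadic_interval k m \<inter> comb a b) \<le> 2 powr ?T"
    if "emeasure lborel (dyadic_interval k m \<inter> comb a b) \<le> 2 powr e" "e \<le> ?T" for e
    using that by (meson ennreal_leI order_trans powr_mono one_le_numeral)
  consider "k \<le> - int a" | "- int a \<le> k" "k \<le> - int b" | "- int b \<le> k" "k \<le> 0" | "0 \<le> k"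
    by linarith
  then show ?thesis
  proof cases
    case 1
    have "emeasure lborel (dyadic_interval k m \<inter> comb a b) \<le> emeasure lborel (dyadic_interval k m)"
      by (intro emeasure_mono) auto
    moreover have "r * k \<le> r * - real a"
      using 1 r by (intro mult_left_mono) auto
    ultimately show ?thesis
      by (intro bound[of k]) (auto simp: emeasure_dyadic_interval algebra_simps)
  next
    case 2
    have "(1 - r) * - real a \<le> (1 - r) * k"
      using 2 r by (intro mult_left_mono) auto
    then show ?thesis
      using emeasure_dyadic_interval_Int_comb_le_tooth[OF ba 2(2)]
      by (intro bound[of "- real a"]) (auto simp: algebra_simps)
  next
    case 3
    have "r * k \<le> 0"
      using 3 r by (simp add: mult_nonneg_nonpos)
    then show ?thesis
      using emeasure_dyadic_interval_Int_comb_le_teeth[OF ba 3(1)] gap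
      by (intro bound[of "k + b - a"]) (auto simp: algebra_simps)
  next
    case 4
    have "emeasure lborel (dyadic_interval k m \<inter> comb a b) \<le> emeasure lborel (comb a b)"
      by (intro emeasure_mono) auto
    moreover have "0 \<le> (1 - r) * k"
      using 4 r by simp
    ultimately show ?thesis
      using emeasure_comb_le[of a b] gap
      by (intro bound[of "real b - real a"]) (auto simp: algebra_simps)
  qed
qed

lemma emeasure_inner_comb:
  assumes "b \<le> a"
  shows "emeasure lborel (inner_comb a b) = 2 powr (real b - real a - 1)"
proof -
  have "disjoint_family_on (inner_tooth a b) {0..<2 ^ b}"
  proof (unfold disjoint_family_on_def, intro ballI impI)
    fix i j :: int assume "i \<noteq> j"
    then have "dyadic_interval (- int b) i \<inter> dyadic_interval (- int b) j = {}"
      by (rule disjoint_dyadic_interval)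
    then show "inner_tooth a b i \<inter> inner_tooth a b j = {}"
      using inner_tooth_subset_tooth tooth_subset_dyadic_interval[OF assms] by blast
  qed
  then have "emeasure lborel (inner_comb a b) = (\<Sum>j\<in>{0..<2 ^ b}. emeasure lborel (inner_tooth a b j))"
    unfolding inner_comb_def by (intro sum_emeasure[symmetric]) auto
  also have "\<dots> = 2 powr real b * (2 powr - real a / 2)"
    by (simp add: emeasure_inner_tooth ennreal_of_nat_eq_real_of_nat ennreal_mult[symmetric] powr_realpow)
  also have "\<dots> = 2 powr (real b - real a - 1)"
    by (simp add: powr_diff powr_add powr_minus field_simps)
  finally show ?thesis .
qed

definition comb_cube :: "nat \<Rightarrow> nat \<Rightarrow> (real^'n::finite) set" where
  "comb_cube a b = {x. \<forall>i. x$i \<in> comb a b}"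

definition inner_comb_cube :: "nat \<Rightarrow> nat \<Rightarrow> (real^'n::finite) set" where
  "inner_comb_cube a b = {x. \<forall>i. x$i \<in> inner_comb a b}"

lemma comb_cube_borel [measurable]: "comb_cube a b \<in> sets borel"
  unfolding comb_cube_def by (rule sets_borel_vec_box) simp

lemma inner_comb_cube_borel [measurable]: "inner_comb_cube a b \<in> sets borel"
  unfolding inner_comb_cube_def by (rule sets_borel_vec_box) simp

lemma borel_measurable_indicator_comb_cube:
  "(indicator (comb_cube a b) :: real^'n::finite \<Rightarrow> real) \<in> borel_measurable lebesgue"
  by (intro borel_measurable_indicator sets_completionI_sets) (simp add: comb_cube_borel)

lemma inner_comb_cube_subset_unit_cube:
  assumes "b \<le> a"
  shows "inner_comb_cube a b \<subseteq> dyadic_cube 0 0"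
  using comb_subset_unit_interval[OF assms] inner_tooth_subset_tooth
  by (fastforce simp: inner_comb_cube_def inner_comb_def comb_def dyadic_cube_eq_vec_box)

lemma measure_inner_comb_cube:
  assumes "b \<le> a"
  shows "measure lebesgue (inner_comb_cube a b :: (real^'n::finite) set)
    = 2 powr (real CARD('n) * (real b - real a - 1))"
proof -
  have "emeasure lebesgue (inner_comb_cube a b :: (real^'n) set) = (\<Prod>i\<in>(UNIV::'n set). emeasure lborel (inner_comb a b))"
    unfolding inner_comb_cube_def by (simp add: sets_borel_vec_box emeasure_lborel_vec_box)
  also have "\<dots> = 2 powr (real CARD('n) * (real b - real a - 1))"
    by (simp add: emeasure_inner_comb[OF assms] ennreal_power powr_power)
  finally show ?thesis
    by (simp add: measure_def)
qed

lemma measure_dyadic_cube_Int_comb_cube_le: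
  fixes r :: real
  assumes "b \<le> a" "0 < r" "r \<le> 1" "r * a \<le> real a - real b"
  shows "measure lebesgue (dyadic_cube k m \<inter> comb_cube a b :: (real^'n::finite) set)
    \<le> 2 powr (real CARD('n) * ((1 - r) * k - r * a))"
proof -
  have eq: "dyadic_cube k m \<inter> comb_cube a b = {x::real^'n. \<forall>i. x$i \<in> dyadic_interval k (m$i) \<inter> comb a b}"
    by (auto simp: dyadic_cube_eq_vec_box comb_cube_def)
  have "emeasure lebesgue (dyadic_cube k m \<inter> comb_cube a b :: (real^'n) set)
      = emeasure lborel {x::real^'n. \<forall>i. x$i \<in> dyadic_interval k (m$i) \<inter> comb a b}"
    unfolding eq by (simp add: sets_borel_vec_box)
  also have "\<dots> = (\<Prod>i\<in>UNIV. emeasure lborel (dyadic_interval k (m$i) \<inter> comb a b))"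
    by (rule emeasure_lborel_vec_box) simp
  also have "\<dots> \<le> (\<Prod>i\<in>(UNIV::'n set). ennreal (2 powr ((1 - r) * k - r * a)))"
    using assms by (intro prod_mono_ennreal emeasure_dyadic_interval_Int_comb_le)
  also have "\<dots> = 2 powr (real CARD('n) * ((1 - r) * k - r * a))"
    by (simp add: ennreal_power powr_power)
  finally show ?thesis
    unfolding measure_def by (intro enn2real_leI) auto
qed

lemma morrey_norm_comb_cube_le:
  assumes ba: "b \<le> a" and q: "0 < q" "q \<le> p" and gap: "q / p * a \<le> real a - real b"
  shows "morrey_norm p q (\<lambda>x. ennreal (indicator (comb_cube a b :: (real^'n::finite) set) x))
    \<le> 2 powr (- real CARD('n) * real a / p)"
proof (rule morrey_norm_indicator_le)
  fix Q :: "(real^'n) set"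
  assume "Q \<in> dyadic_cubes"
  then obtain k m where Q: "Q = dyadic_cube k m"
    by (auto simp: dyadic_cubes_def)
  define n where "n = real CARD('n)"
  define T where "T = (1 - q / p) * k - q / p * a"
  have "measure lebesgue Q powr (1 / p) * (measure lebesgue (Q \<inter> comb_cube a b) / measure lebesgue Q) powr (1 / q)
      \<le> (2 powr (n * k)) powr (1 / p) * (2 powr (n * T) / 2 powr (n * k)) powr (1 / q)"
    using measure_dyadic_cube_Int_comb_cube_le[OF ba _ _ gap, of k m] q
    by (auto simp: Q measure_dyadic_cube n_def T_def intro!: mult_left_mono powr_mono2 divide_right_mono)
  also have "\<dots> = 2 powr (n * k / p + (n * T - n * k) / q)"
    by (simp add: powr_powr powr_diff[symmetric] powr_add[symmetric])
  also have "n * k / p + (n * T - n * k) / q = - n * a / p"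
    using q by (simp add: T_def field_simps)
  finally show "measure lebesgue Q powr (1 / p) * (measure lebesgue (Q \<inter> comb_cube a b) / measure lebesgue Q) powr (1 / q)
      \<le> 2 powr (- real CARD('n) * real a / p)"
    by (simp add: n_def)
qed (use q in auto)

lemma morrey_norm_comb_cube_mult_le:
  fixes \<alpha> p1 p2 q1 q2 s :: real
  assumes ba: "b \<le> a" and q: "0 < q1" "q1 \<le> p1" "0 < q2" "q2 \<le> p2"
    and gap: "max (q1 / p1) (q2 / p2) * a \<le> real a - real b"
    and exponents: "1 / s = 1 / p1 + 1 / p2 - \<alpha> / real CARD('n)"
  shows "morrey_norm p1 q1 (\<lambda>x. ennreal (indicator (comb_cube a b :: (real^'n::finite) set) x))
      * morrey_norm p2 q2 (\<lambda>x. ennreal (indicator (comb_cube a b :: (real^'n) set) x))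
    \<le> 2 powr (- real a * (real CARD('n) / s + \<alpha>))"
proof -
  define n where "n = real CARD('n)"
  have "q / p * a \<le> real a - real b" if "q / p \<le> max (q1 / p1) (q2 / p2)" for q p
    using that by (rule order_trans[OF mult_right_mono gap]) simp
  then have gap1: "q1 / p1 * a \<le> real a - real b" and gap2: "q2 / p2 * a \<le> real a - real b"
    by simp_all
  have "morrey_norm p1 q1 (\<lambda>x. ennreal (indicator (comb_cube a b :: (real^'n) set) x))
      * morrey_norm p2 q2 (\<lambda>x. ennreal (indicator (comb_cube a b :: (real^'n) set) x))
    \<le> ennreal (2 powr (- n * a / p1)) * ennreal (2 powr (- n * a / p2))"
    unfolding n_def using morrey_norm_comb_cube_le[OF ba q(1,2) gap1] morrey_norm_comb_cube_le[OF ba q(3,4) gap2]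
    by (intro mult_mono) auto
  also have "\<dots> = 2 powr (- real a * (n / s + \<alpha>))"
    using exponents by (simp add: n_def ennreal_mult[symmetric] powr_add[symmetric] field_simps)
  finally show ?thesis
    by (simp add: n_def)
qed

section \<open>The bilinear fractional integral on a comb cube\<close>

lemma add_mem_comb_cube:
  fixes x y :: "real^'n::finite"
  assumes x: "x \<in> inner_comb_cube a b" and y: "\<And>i. \<bar>y$i\<bar> < 2 powr - real a / 4"
  shows "x + y \<in> comb_cube a b"
proof -
  have "(x + y)$i \<in> comb a b" for i
  proof -
    obtain j where j: "j \<in> {0..<2 ^ b}" and xj: "x$i \<in> inner_tooth a b j"
      using x unfolding inner_comb_cube_def inner_comb_def by blast
    have "(x + y)$i \<in> tooth a b j"
      using xj y[of i] by (auto simp: inner_tooth_def tooth_def abs_less_iff)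
    with j show ?thesis
      by (auto simp: comb_def)
  qed
  then show ?thesis
    by (simp add: comb_cube_def)
qed

lemma comb_cube_kernel_ge:
  fixes x y :: "real^'n::finite" and \<alpha> :: real
  assumes \<alpha>: "\<alpha> \<le> real CARD('n)" and x: "x \<in> inner_comb_cube a b"
    and y: "\<And>i. y$i \<in> {2 powr - real a / 8 <..< 2 powr - real a / 4}"
  shows "1 / (real CARD('n) * 2 powr - real a) powr (real CARD('n) - \<alpha>)
    \<le> indicator (comb_cube a b) (x - y) * indicator (comb_cube a b) (x + y) / norm y powr (real CARD('n) - \<alpha>)"
proof -
  define n where "n = real CARD('n)"
  define e where "e = (2::real) powr - real a"
  have e: "e > 0" and n: "n > 0"
    by (simp_all add: e_def n_def)
  have "\<bar>y$i\<bar> < 2 powr - real a / 4" "\<bar>(- y)$i\<bar> < 2 powr - real a / 4" for i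
    using y[of i] by auto
  then have "x + y \<in> comb_cube a b" "x - y \<in> comb_cube a b"
    using add_mem_comb_cube[OF x, of y] add_mem_comb_cube[OF x, of "- y"] by auto
  moreover have "\<bar>y$i\<bar> \<le> e" for i
    using y[of i] e by (auto simp: e_def)
  then have "norm y powr (n - \<alpha>) \<le> (n * e) powr (n - \<alpha>)"
    using \<alpha> unfolding n_def by (intro powr_mono2 norm_le_card_mult_cart) auto
  moreover have "y \<noteq> 0"
    using y[of undefined] by auto
  ultimately show ?thesis
    unfolding n_def[symmetric] e_def[symmetric] using n e by (auto intro!: divide_left_mono mult_pos_pos)
qed

lemma bilinear_frac_int_comb_cube_ge:
  fixes x :: "real^'n::finite" and \<alpha> :: real
  assumes \<alpha>: "\<alpha> \<le> real CARD('n)" and x: "x \<in> inner_comb_cube a b"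
  shows "ennreal ((2 powr - real a / 8) ^ CARD('n) / (real CARD('n) * 2 powr - real a) powr (real CARD('n) - \<alpha>))
    \<le> bilinear_frac_int \<alpha> (indicator (comb_cube a b)) (indicator (comb_cube a b)) x"
proof -
  define n where "n = real CARD('n)"
  define e where "e = (2::real) powr - real a"
  define c where "c = 1 / (n * e) powr (n - \<alpha>)"
  define D where "D = {y::real^'n. \<forall>i. y$i \<in> {e / 8 <..< e / 4}}"
  have e: "e > 0" and c: "c \<ge> 0"
    by (simp_all add: e_def n_def c_def)
  have "D \<in> sets lebesgue"
    unfolding D_def by (intro sets_completionI_sets sets_borel_vec_box) simp
  moreover have "emeasure lebesgue D = (e / 4 - e / 8) ^ CARD('n)"
    unfolding D_def using e by (intro emeasure_lebesgue_vec_box_Ioo) simp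
  ultimately have "ennreal (c * (e / 8) ^ CARD('n)) = (\<integral>\<^sup>+ y. ennreal c * indicator D y \<partial>lebesgue)"
    using e c by (simp add: nn_integral_cmult_indicator ennreal_mult)
  also have "\<dots> \<le> bilinear_frac_int \<alpha> (indicator (comb_cube a b)) (indicator (comb_cube a b)) x"
    unfolding bilinear_frac_int_def
  proof (intro nn_integral_mono)
    fix y
    show "ennreal c * indicator D y \<le> ennreal (indicator (comb_cube a b) (x - y) * indicator (comb_cube a b) (x + y)
        / norm y powr (real CARD('n) - \<alpha>))"
      using comb_cube_kernel_ge[OF \<alpha> x, of y]
      by (cases "y \<in> D") (auto simp: D_def c_def n_def e_def intro: ennreal_leI)
  qed
  finally show ?thesis
    by (simp add: c_def n_def e_def)
qed

lemma morrey_norm_bilinear_comb_cube_ge: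
  fixes \<alpha> :: real
  assumes ba: "b \<le> a" and \<alpha>: "\<alpha> \<le> real CARD('n)" and t: "0 < t"
  shows "ennreal (2 powr (real CARD('n) * (real b - real a - 1) / t - real a * \<alpha>)
      / (real CARD('n) powr (real CARD('n) - \<alpha>) * 8 ^ CARD('n)))
    \<le> morrey_norm s t (bilinear_frac_int \<alpha> (indicator (comb_cube a b :: (real^'n::finite) set)) (indicator (comb_cube a b)))"
proof -
  define n where "n = real CARD('n)"
  define w where "w = (2 powr - real a / 8) ^ CARD('n) / (n * 2 powr - real a) powr (n - \<alpha>)"
  define Q :: "(real^'n) set" where "Q = dyadic_cube 0 0"
  define A :: "(real^'n) set" where "A = inner_comb_cube a b"
  have lower: "ennreal (measure lebesgue Q powr (1 / s) * w * (measure lebesgue A / measure lebesgue Q) powr (1 / t))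
    \<le> morrey_norm s t (bilinear_frac_int \<alpha> (indicator (comb_cube a b :: (real^'n) set)) (indicator (comb_cube a b)))"
    using inner_comb_cube_subset_unit_cube[OF ba] bilinear_frac_int_comb_cube_ge[OF \<alpha>] t
    by (intro morrey_norm_ge_on_subset) (auto simp: dyadic_cubes_def Q_def A_def w_def n_def)
  have "measure lebesgue Q = 1"
    by (simp add: Q_def measure_dyadic_cube)
  moreover have "measure lebesgue A powr (1 / t) = 2 powr (n * (real b - real a - 1) / t)"
    by (simp add: A_def measure_inner_comb_cube[OF ba] powr_powr n_def)
  moreover have "w = 2 powr (- real a * \<alpha>) / (n powr (n - \<alpha>) * 8 ^ CARD('n))"
  proof -
    have "(2 powr - real a / 8) ^ CARD('n) = 2 powr (- real a * \<alpha>) * 2 powr (- real a * (n - \<alpha>)) / 8 ^ CARD('n)"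
      by (simp add: n_def power_divide powr_power powr_add[symmetric] algebra_simps)
    moreover have "(n * 2 powr - real a) powr (n - \<alpha>) = n powr (n - \<alpha>) * 2 powr (- real a * (n - \<alpha>))"
      by (simp add: powr_mult powr_powr)
    ultimately show ?thesis
      by (simp add: w_def)
  qed
  moreover have "(2::real) powr (n * (real b - real a - 1) / t - real a * \<alpha>)
      = 2 powr (- real a * \<alpha>) * 2 powr (n * (real b - real a - 1) / t)"
    by (simp add: powr_add[symmetric])
  ultimately have "measure lebesgue Q powr (1 / s) * w * (measure lebesgue A / measure lebesgue Q) powr (1 / t)
      = 2 powr (n * (real b - real a - 1) / t - real a * \<alpha>) / (n powr (n - \<alpha>) * 8 ^ CARD('n))"
    by simp
  with lower show ?thesis
    by (simp add: n_def)
qed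

section \<open>Choosing the comb\<close>

lemma exists_comb_parameters:
  fixes \<theta> s t n \<alpha> C K :: real
  assumes \<theta>: "0 \<le> \<theta>" "\<theta> \<le> 1" "\<theta> < t / s" and n: "0 < n" and s: "0 < s" and t: "0 < t"
    and C: "0 < C" and K: "0 < K"
  obtains a b :: nat where "b \<le> a" "\<theta> * a \<le> real a - real b"
    "C * 2 powr (- real a * (n / s + \<alpha>)) < 2 powr (n * (real b - real a - 1) / t - real a * \<alpha>) / K"
proof -
  define \<delta> where "\<delta> = 1 / s - \<theta> / t"
  have "0 < n * \<delta>"
    using n s t \<theta>(3) by (simp add: \<delta>_def field_simps)
  then obtain a :: nat where a: "log 2 (C * K) + 2 * n / t < a * (n * \<delta>)"
    using reals_Archimedean3 by blast
  define d where "d = nat \<lceil>a * \<theta>\<rceil>"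
  have d: "a * \<theta> \<le> d" "d \<le> a * \<theta> + 1"
    using \<theta> by (auto simp: d_def)
  have "d \<le> a"
    using \<theta> by (auto simp: d_def ceiling_le_iff mult_left_le)
  define b where "b = a - d"
  show ?thesis
  proof (rule that)
    show "b \<le> a" "\<theta> * a \<le> real a - real b"
      using d \<open>d \<le> a\<close> by (simp_all add: b_def mult.commute)
    have "n * (real d + 1) / t \<le> n * (a * \<theta> + 2) / t"
      using d n t by (intro divide_right_mono mult_left_mono) auto
    moreover have "a * (n * \<delta>) - 2 * n / t = n * a / s - n * (a * \<theta> + 2) / t"
      using t s by (simp add: \<delta>_def field_simps)
    ultimately have "log 2 (C * K) < n * a / s - n * (real d + 1) / t"
      using a by linarith
    then have "C * K < 2 powr (n * a / s - n * (real d + 1) / t)"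
      using C K by (simp add: log_less_iff)
    then have "C * K * 2 powr (- real a * (n / s + \<alpha>))
        < 2 powr (n * a / s - n * (real d + 1) / t) * 2 powr (- real a * (n / s + \<alpha>))"
      by simp
    also have "\<dots> = 2 powr (n * a / s - n * (real d + 1) / t + - real a * (n / s + \<alpha>))"
      by (rule powr_add[symmetric])
    also have "n * a / s - n * (real d + 1) / t + - real a * (n / s + \<alpha>) = n * (real b - real a - 1) / t - real a * \<alpha>"
      using \<open>d \<le> a\<close> by (simp add: b_def algebra_simps add_divide_distrib diff_divide_distrib)
    finally show "C * 2 powr (- real a * (n / s + \<alpha>)) < 2 powr (n * (real b - real a - 1) / t - real a * \<alpha>) / K"
      using K by (simp add: pos_less_divide_eq mult_ac)
  qed
qed

theorem theorem3p1:
  fixes \<alpha> s t p1 p2 q1 q2 :: real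
  assumes "0 < \<alpha>" and "\<alpha> < real CARD('n::finite)"
    and "0 < t" and "t \<le> s"
    and "0 < q1" and "q1 \<le> p1" and "0 < q2" and "q2 \<le> p2"
    and "1 / s = 1 / p1 + 1 / p2 - \<alpha> / real CARD('n)"
    and "t / s > max (q1 / p1) (q2 / p2)"
  shows "\<not> (\<exists>C>0. \<forall>f g :: real ^ 'n \<Rightarrow> real.
            f \<in> borel_measurable lebesgue \<longrightarrow> g \<in> borel_measurable lebesgue \<longrightarrow>
            (\<forall>x. 0 \<le> f x) \<longrightarrow> (\<forall>x. 0 \<le> g x) \<longrightarrow>
            morrey_norm p1 q1 (\<lambda>x. ennreal (f x)) * morrey_norm p2 q2 (\<lambda>x. ennreal (g x)) < \<infinity> \<longrightarrow>
            morrey_norm s t (bilinear_frac_int \<alpha> f g)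
              \<le> ennreal C * morrey_norm p1 q1 (\<lambda>x. ennreal (f x)) * morrey_norm p2 q2 (\<lambda>x. ennreal (g x)))"
proof -
  define n where "n = real CARD('n)"
  define \<theta> where "\<theta> = max (q1 / p1) (q2 / p2)"
  have \<theta>: "0 \<le> \<theta>" "\<theta> \<le> 1" "\<theta> < t / s"
    using assms(5-8,10) by (auto simp: \<theta>_def le_max_iff_disj)
  have "\<exists>f :: real^'n \<Rightarrow> real. f \<in> borel_measurable lebesgue \<and> (\<forall>x. 0 \<le> f x) \<and>
      morrey_norm p1 q1 (\<lambda>x. ennreal (f x)) * morrey_norm p2 q2 (\<lambda>x. ennreal (f x)) < \<infinity> \<and>
      ennreal C * morrey_norm p1 q1 (\<lambda>x. ennreal (f x)) * morrey_norm p2 q2 (\<lambda>x. ennreal (f x))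
        < morrey_norm s t (bilinear_frac_int \<alpha> f f)" if C: "0 < C" for C
  proof -
    obtain a b :: nat where ba: "b \<le> a" and gap: "\<theta> * a \<le> real a - real b"
      and ratio: "C * 2 powr (- real a * (n / s + \<alpha>))
        < 2 powr (n * (real b - real a - 1) / t - real a * \<alpha>) / (n powr (n - \<alpha>) * 8 ^ CARD('n))"
    proof (rule exists_comb_parameters[OF \<theta> _ _ assms(3) C])
      show "0 < n" "0 < s" "0 < n powr (n - \<alpha>) * 8 ^ CARD('n)"
        using assms(3,4) by (simp_all add: n_def)
    qed
    define f :: "real^'n \<Rightarrow> real" where "f = indicator (comb_cube a b)"
    have upper: "morrey_norm p1 q1 (\<lambda>x. ennreal (f x)) * morrey_norm p2 q2 (\<lambda>x. ennreal (f x))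
        \<le> 2 powr (- real a * (n / s + \<alpha>))"
      unfolding f_def n_def using gap assms(9)
      by (intro morrey_norm_comb_cube_mult_le[OF ba assms(5-8)]) (simp_all add: \<theta>_def)
    then have "ennreal C * morrey_norm p1 q1 (\<lambda>x. ennreal (f x)) * morrey_norm p2 q2 (\<lambda>x. ennreal (f x))
        \<le> ennreal (C * 2 powr (- real a * (n / s + \<alpha>)))"
      using C by (simp add: mult.assoc ennreal_mult mult_left_mono)
    also have "\<dots> < ennreal (2 powr (n * (real b - real a - 1) / t - real a * \<alpha>) / (n powr (n - \<alpha>) * 8 ^ CARD('n)))"
      using ratio by (intro ennreal_lessI) (auto simp: n_def)
    also have "\<dots> \<le> morrey_norm s t (bilinear_frac_int \<alpha> f f)"
      unfolding f_def n_def using assms(2) by (intro morrey_norm_bilinear_comb_cube_ge[OF ba _ assms(3)]) simp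
    finally show ?thesis
      using upper by (intro exI[of _ f])
        (auto simp: f_def borel_measurable_indicator_comb_cube top_unique ennreal_less_top intro: le_less_trans)
  qed
  then show ?thesis
    by (meson not_le)
qed

end
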